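(* Let $\vartheta\in\{p,bp,r\}$. Then both of the following inclusions hold and are strict (proper): (i) $\mathcal{H}_{\vartheta}\subset\mathcal{BV}$; (ii) $\mathcal{H}_{\vartheta}\subset\mathcal{BV}_{\vartheta 0}$.
   Context: $\Omega$ denotes the set of all complex double sequences $x=(x_{kl})_{k,l\ge 1}$. A double sequence is $p$-convergent (Pringsheim convergent) to $L$ if for every $\varepsilon>0$ there is $N$ with $|x_{kl}-L|<\varepsilon$ for all $k,l\ge N$; $bp$-convergent if bounded and $p$-convergent; $r$-convergent (regularly convergent) if $p$-convergent and every row and every column converges. For $\vartheta\in\{p,bp,r\}$, $\mathcal{C}_{\vartheta 0}$ is the set of double sequences $\vartheta$-convergent to $0$. $\Delta x_{kl}=x_{kl}-x_{k+1,l}-x_{k,l+1}+x_{k+1,l+1}$, and $\mathcal{H}_{\vartheta}=\{x\in\Omega:\sum_{k,l=1}^{\infty}|kl\,\Delta x_{kl}|<\infty\}\cap\mathcal{C}_{\vartheta 0}$. $\mathcal{BV}=\{x\in\Omega:\sum_{k,l=1}^{\infty}|\Delta x_{kl}|<\infty\}$ is the space of double sequences of bounded variation, and $\mathcal{BV}_{\vartheta 0}=\mathcal{BV}\cap\mathcal{C}_{\vartheta 0}$. *)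

theory Defs
  imports "HOL-Analysis.Analysis"
begin

text \<open>Double sequences x = (x_kl), k,l >= 1, represented as functions nat => nat => complex;
  values at index 0 are ignored by every notion below.\<close>
type_synonym dseq = "nat \<Rightarrow> nat \<Rightarrow> complex"

datatype conv_mode = P | BP | R

definition p_conv :: "dseq \<Rightarrow> complex \<Rightarrow> bool" where
  "p_conv x L \<longleftrightarrow> (\<forall>\<epsilon>>0. \<exists>N. \<forall>k\<ge>N. \<forall>l\<ge>N. cmod (x k l - L) < \<epsilon>)"

definition bp_conv :: "dseq \<Rightarrow> complex \<Rightarrow> bool" where
  "bp_conv x L \<longleftrightarrow> bounded {x k l |k l. 1 \<le> k \<and> 1 \<le> l} \<and> p_conv x L"

definition r_conv :: "dseq \<Rightarrow> complex \<Rightarrow> bool" where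
  "r_conv x L \<longleftrightarrow> p_conv x L \<and> (\<forall>k\<ge>1. convergent (\<lambda>l. x k l))
                              \<and> (\<forall>l\<ge>1. convergent (\<lambda>k. x k l))"

fun conv_to :: "conv_mode \<Rightarrow> dseq \<Rightarrow> complex \<Rightarrow> bool" where
  "conv_to P x L = p_conv x L"
| "conv_to BP x L = bp_conv x L"
| "conv_to R x L = r_conv x L"

definition C0 :: "conv_mode \<Rightarrow> dseq set" where
  "C0 \<theta> = {x. conv_to \<theta> x 0}"

definition Delta :: "dseq \<Rightarrow> nat \<Rightarrow> nat \<Rightarrow> complex" where
  "Delta x k l = x k l - x (Suc k) l - x k (Suc l) + x (Suc k) (Suc l)"

definition H :: "conv_mode \<Rightarrow> dseq set" where
  "H \<theta> = {x. (\<lambda>(k,l). cmod (of_nat (k*l) * Delta x k l)) summable_on ({1..} \<times> {1..})} \<inter> C0 \<theta>"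

definition BV :: "dseq set" where
  "BV = {x. (\<lambda>(k,l). cmod (Delta x k l)) summable_on ({1..} \<times> {1..})}"

definition BV0 :: "conv_mode \<Rightarrow> dseq set" where
  "BV0 \<theta> = BV \<inter> C0 \<theta>"

end

theory Submission
  imports Defs
begin

text \<open>Since \<open>k l \<ge> 1\<close> on the index range, every \<open>x \<in> H \<theta>\<close> has absolutely summable
  differences, so \<open>H \<theta> \<subseteq> BV0 \<theta> \<subseteq> BV\<close>. Both inclusions are strict because of the sequence
  with first column \<open>x\<^sub>k\<^sub>1 = 1/k\<close> and zeros elsewhere: it tends to 0 in every sense, its
  only nonzero differences \<open>\<Delta>x\<^sub>k\<^sub>1 = 1/k - 1/(k+1)\<close> telescope, but the weighted differences
  \<open>k \<Delta>x\<^sub>k\<^sub>1 = 1/(k+1)\<close> form the harmonic series.\<close>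

lemma summable_on_column_iff:
  fixes g :: "'a \<times> 'b \<Rightarrow> 'c::{comm_monoid_add, topological_space}"
  assumes "j \<in> B" and "\<And>a b. a \<in> A \<Longrightarrow> b \<in> B \<Longrightarrow> b \<noteq> j \<Longrightarrow> g (a, b) = 0"
  shows "g summable_on (A \<times> B) \<longleftrightarrow> (\<lambda>a. g (a, j)) summable_on A"
proof -
  have "g summable_on (A \<times> B) \<longleftrightarrow> g summable_on ((\<lambda>a. (a, j)) ` A)"
    by (rule summable_on_cong_neutral) (use assms in auto)
  also have "\<dots> \<longleftrightarrow> (\<lambda>a. g (a, j)) summable_on A"
    by (subst summable_on_reindex) (auto simp: inj_on_def o_def)
  finally show ?thesis .
qed

lemma summable_on_atLeast_nonneg_real_iff:
  fixes f :: "nat \<Rightarrow> real"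
  assumes "\<And>n. f n \<ge> 0"
  shows "f summable_on {m..} \<longleftrightarrow> summable f"
proof -
  have "f summable_on {m..} \<longleftrightarrow> f summable_on ({m..} \<union> {..<m})"
    using summable_on_union[of f "{m..}" "{..<m}"] summable_on_subset[of f _ "{m..}"]
    by auto
  also have "{m..} \<union> {..<m} = UNIV"
    by auto
  finally show ?thesis
    using summable_on_UNIV_nonneg_real_iff[OF assms] by simp
qed

lemma summable_on_first_column_iff:
  fixes f :: "nat \<Rightarrow> nat \<Rightarrow> real"
  assumes "\<And>k. f k 1 \<ge> 0" and "\<And>k l. l \<ge> 2 \<Longrightarrow> f k l = 0"
  shows "(\<lambda>(k, l). f k l) summable_on ({1..} \<times> {1..}) \<longleftrightarrow> summable (\<lambda>k. f k 1)"
proof -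
  have "(\<lambda>(k, l). f k l) summable_on ({1..} \<times> {1..}) \<longleftrightarrow> (\<lambda>k. f k 1) summable_on {1..}"
    by (rule summable_on_column_iff[where g = "\<lambda>(k, l). f k l", unfolded case_prod_conv])
       (use assms(2) in auto)
  also have "\<dots> \<longleftrightarrow> summable (\<lambda>k. f k 1)"
    by (rule summable_on_atLeast_nonneg_real_iff) (rule assms(1))
  finally show ?thesis .
qed

definition harmonic_column :: dseq where
  "harmonic_column k l = (if l = 1 then complex_of_real (1 / real k) else 0)"

lemma Delta_harmonic_column_first:
  "Delta harmonic_column k 1 = complex_of_real (1 / real k - 1 / real (Suc k))"
  by (simp add: Delta_def harmonic_column_def del: of_nat_Suc)

lemma norm_Delta_harmonic_column_first:
  assumes "k \<ge> 1"
  shows "cmod (Delta harmonic_column k 1) = 1 / real k - 1 / real (Suc k)"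
proof -
  have "1 / real (Suc k) \<le> 1 / real k"
    using assms by (simp add: frac_le del: of_nat_Suc)
  then show ?thesis
    by (simp only: Delta_harmonic_column_first norm_of_real abs_of_nonneg diff_ge_0_iff_ge)
qed

lemma Delta_harmonic_column_other: "l \<ge> 2 \<Longrightarrow> Delta harmonic_column k l = 0"
  by (simp add: Delta_def harmonic_column_def)

lemma harmonic_column_in_C0: "harmonic_column \<in> C0 \<theta>"
proof -
  have "p_conv harmonic_column 0"
    unfolding p_conv_def by (auto intro!: exI[of _ 2] simp: harmonic_column_def)
  moreover have "bounded {harmonic_column k l |k l. 1 \<le> k \<and> 1 \<le> l}"
    unfolding bounded_iff by (auto intro!: exI[of _ 1] simp: harmonic_column_def norm_divide)
  moreover have "convergent (\<lambda>l. harmonic_column k l)" for k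
  proof -
    have "(\<lambda>l. harmonic_column k (l + 2)) \<longlonglongrightarrow> 0"
      by (simp add: harmonic_column_def)
    then have "(\<lambda>l. harmonic_column k l) \<longlonglongrightarrow> 0"
      by (rule LIMSEQ_offset)
    then show ?thesis
      by (auto simp: convergent_def)
  qed
  moreover have "convergent (\<lambda>k. harmonic_column k l)" for l
  proof (cases "l = 1")
    case True
    have "(\<lambda>k. complex_of_real (1 / real k)) \<longlonglongrightarrow> of_real 0"
      by (intro tendsto_of_real lim_const_over_n)
    with True show ?thesis
      unfolding harmonic_column_def convergent_def by auto
  qed (simp add: harmonic_column_def convergent_const)
  ultimately show ?thesis
    unfolding C0_def by (cases \<theta>) (auto simp: bp_conv_def r_conv_def)
qed

lemma harmonic_column_in_BV: "harmonic_column \<in> BV"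
proof -
  have telescoping: "\<forall>\<^sub>F k in sequentially.
      cmod (Delta harmonic_column k 1) = 1 / real k - 1 / real (Suc k)"
    by (rule eventually_sequentiallyI norm_Delta_harmonic_column_first)+
  have "summable (\<lambda>k. cmod (Delta harmonic_column k 1))"
    unfolding summable_cong[OF telescoping] by (rule telescope_summable'[OF lim_const_over_n])
  then show ?thesis
    unfolding BV_def mem_Collect_eq
    by (subst summable_on_first_column_iff) (auto simp: Delta_harmonic_column_other)
qed

lemma harmonic_column_not_in_H: "harmonic_column \<notin> H \<theta>"
proof
  have harmonic: "\<forall>\<^sub>F k in sequentially.
      cmod (of_nat k * Delta harmonic_column k 1) = inverse (real (Suc k))"
  proof (rule eventually_sequentiallyI)
    fix k :: nat assume "k \<ge> 1"
    then show "cmod (of_nat k * Delta harmonic_column k 1) = inverse (real (Suc k))"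
      unfolding norm_mult norm_of_nat norm_Delta_harmonic_column_first[OF \<open>k \<ge> 1\<close>]
      by (simp add: divide_simps)
  qed
  assume "harmonic_column \<in> H \<theta>"
  then have "(\<lambda>(k, l). cmod (of_nat (k * l) * Delta harmonic_column k l)) summable_on ({1..} \<times> {1..})"
    unfolding H_def by simp
  then have "summable (\<lambda>k. cmod (of_nat k * Delta harmonic_column k 1))"
    by (subst (asm) summable_on_first_column_iff) (auto simp: Delta_harmonic_column_other)
  then have "summable (\<lambda>k. inverse (real (Suc k)))"
    unfolding summable_cong[OF harmonic] .
  then show False
    using not_summable_harmonic summable_Suc_iff[of "\<lambda>k. inverse (real k)"] by auto
qed

lemma H_subset_BV0: "H \<theta> \<subseteq> BV0 \<theta>"
proof
  fix x assume "x \<in> H \<theta>"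
  then have weighted: "(\<lambda>(k, l). cmod (of_nat (k * l) * Delta x k l)) summable_on ({1..} \<times> {1..})"
    and "x \<in> C0 \<theta>"
    unfolding H_def by auto
  have "(\<lambda>(k, l). cmod (Delta x k l)) summable_on ({1..} \<times> {1..})"
  proof (rule summable_on_comparison_test[OF weighted])
    fix y :: "nat \<times> nat" assume "y \<in> {1..} \<times> {1..}"
    then obtain k l where y: "y = (k, l)" "k \<ge> 1" "l \<ge> 1"
      by auto
    then have "1 \<le> real (k * l)"
      by (metis One_nat_def Suc_le_eq of_nat_1 of_nat_le_iff nat_0_less_mult_iff)
    then show "(\<lambda>(k, l). cmod (Delta x k l)) y \<le> (\<lambda>(k, l). cmod (of_nat (k * l) * Delta x k l)) y"
      using y by (simp add: norm_mult mult_le_cancel_right1 del: of_nat_mult)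
  qed auto
  with \<open>x \<in> C0 \<theta>\<close> show "x \<in> BV0 \<theta>"
    unfolding BV0_def BV_def by simp
qed

theorem theorem2p3:
  fixes \<theta> :: conv_mode
  shows "H \<theta> \<subset> BV \<and> H \<theta> \<subset> BV0 \<theta>"
proof -
  have "H \<theta> \<subseteq> BV0 \<theta>" "BV0 \<theta> \<subseteq> BV"
    using H_subset_BV0 by (auto simp: BV0_def)
  moreover have "harmonic_column \<in> BV0 \<theta> - H \<theta>"
    using harmonic_column_in_BV harmonic_column_in_C0 harmonic_column_not_in_H
    by (simp add: BV0_def)
  ultimately show ?thesis
    by blast
qed

end
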